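(* Let $B_H$ be an $\mathbb{F}$-adapted fractional Brownian motion with Hurst parameter $\frac12<H<1$ (with continuous paths). Then $B_H\in\mathbf{Q}^p(\mathbb{F})$ for every $p>\frac1H$.
   Context: $\mathbb{F}$ is the usual augmentation of the filtration of a $d$-dimensional Brownian motion on $(\Omega,\mathcal{F},\mathbb{P})$; $0<T<\infty$. A random partition is a strictly increasing sequence $\tau=(S_n)_{n\ge0}$ of $\mathbb{F}$-stopping times with $S_0=0$ and $S_n\uparrow+\infty$ a.s.; $\mathbb{T}$ is the set of all random partitions. For a process $Y$ on $[0,T]$, $Q^\alpha_\tau(Y)=|Y(0)|^\alpha+\sum_{n\ge0}|Y(S_{n+1})-Y(S_n)|^\alpha$ (increments over $[0,T]$, i.e. evaluating at $S_n\wedge T$). $\mathbf{Q}^\alpha(\mathbb{F})$ is the set of Wiener functionals ($\mathbb{F}$-adapted continuous processes $Y$ with $\mathbb{E}\sup_{t\le T}|Y(t)|^2<\infty$) such that $\|Y\|_{\mathbf{Q}^\alpha}=\sup_{\tau\in\mathbb{T}}[\mathbb{E}Q^\alpha_\tau(Y)]^{1/\alpha}<\infty$. *)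

theory Defs
  imports "HOL-Probability.Probability"
begin

definition brownian_motion :: "'a measure \<Rightarrow> (real \<Rightarrow> 'a \<Rightarrow> real^'d) \<Rightarrow> bool" where
  "brownian_motion M W \<longleftrightarrow>
     prob_space M \<and>
     (\<forall>t. W t \<in> borel_measurable M) \<and>
     (\<forall>\<omega>\<in>space M. W 0 \<omega> = 0) \<and>
     (\<forall>\<omega>\<in>space M. continuous_on {0..} (\<lambda>t. W t \<omega>)) \<and>
     (\<forall>(n::nat) (t::nat \<Rightarrow> real). 0 \<le> t 0 \<and> (\<forall>i<n. t i \<le> t (Suc i)) \<longrightarrow>
        prob_space.indep_vars M (\<lambda>_. borel) (\<lambda>i \<omega>. W (t (Suc i)) \<omega> - W (t i) \<omega>) {..<n}) \<and>
     (\<forall>s t. 0 \<le> s \<and> s < t \<longrightarrow>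
        prob_space.indep_vars M (\<lambda>_. borel) (\<lambda>i \<omega>. (W t \<omega> - W s \<omega>) $ i) UNIV \<and>
        (\<forall>i. distributed M lborel (\<lambda>\<omega>. (W t \<omega> - W s \<omega>) $ i)
                (\<lambda>x. ennreal (normal_density 0 (sqrt (t - s)) x))))"

(* The usual augmentation F_t of the natural filtration of W:
   F_t = intersection over u > t of sigma(W_s, s <= u; all P-null sets of the completion) *)
definition bm_filt :: "'a measure \<Rightarrow> (real \<Rightarrow> 'a \<Rightarrow> real^'d::finite) \<Rightarrow> real \<Rightarrow> 'a set set" where
  "bm_filt M W t = (\<Inter>u\<in>{t<..}. sigma_sets (space M)
      ((\<Union>s\<in>{0..u}. {W s -` A \<inter> space M | A. A \<in> sets borel}) \<union> null_sets (completion M)))"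

definition bm_stopping_time :: "'a measure \<Rightarrow> (real \<Rightarrow> 'a \<Rightarrow> real^'d::finite) \<Rightarrow> ('a \<Rightarrow> real) \<Rightarrow> bool" where
  "bm_stopping_time M W S \<longleftrightarrow> (\<forall>t\<ge>0. {\<omega>\<in>space M. S \<omega> \<le> t} \<in> bm_filt M W t)"

definition random_partition :: "'a measure \<Rightarrow> (real \<Rightarrow> 'a \<Rightarrow> real^'d::finite) \<Rightarrow> (nat \<Rightarrow> 'a \<Rightarrow> real) \<Rightarrow> bool" where
  "random_partition M W S \<longleftrightarrow>
     (\<forall>n. bm_stopping_time M W (S n)) \<and>
     (\<forall>\<omega>\<in>space M. S 0 \<omega> = 0) \<and>
     (\<forall>n. \<forall>\<omega>\<in>space M. S n \<omega> < S (Suc n) \<omega>) \<and>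
     (AE \<omega> in completion M. filterlim (\<lambda>n. S n \<omega>) at_top sequentially)"

definition Qsum :: "real \<Rightarrow> real \<Rightarrow> (real \<Rightarrow> 'a \<Rightarrow> real) \<Rightarrow> (nat \<Rightarrow> 'a \<Rightarrow> real) \<Rightarrow> 'a \<Rightarrow> ennreal" where
  "Qsum \<alpha> T Y S \<omega> = ennreal (\<bar>Y 0 \<omega>\<bar> powr \<alpha>) +
     (\<Sum>n. ennreal (\<bar>Y (min (S (Suc n) \<omega>) T) \<omega> - Y (min (S n \<omega>) T) \<omega>\<bar> powr \<alpha>))"

(* sup over tau of E Q^alpha_tau(Y);  ||Y||_{Q^alpha} is its 1/alpha-th power *)
definition Qnorm_pow :: "'a measure \<Rightarrow> (real \<Rightarrow> 'a \<Rightarrow> real^'d::finite) \<Rightarrow> real \<Rightarrow> real \<Rightarrow> (real \<Rightarrow> 'a \<Rightarrow> real) \<Rightarrow> ennreal" where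
  "Qnorm_pow M W T \<alpha> Y = (SUP S\<in>{S. random_partition M W S}. \<integral>\<^sup>+ \<omega>. Qsum \<alpha> T Y S \<omega> \<partial>completion M)"

definition wiener_functional :: "'a measure \<Rightarrow> (real \<Rightarrow> 'a \<Rightarrow> real^'d::finite) \<Rightarrow> real \<Rightarrow> (real \<Rightarrow> 'a \<Rightarrow> real) \<Rightarrow> bool" where
  "wiener_functional M W T Y \<longleftrightarrow>
     (\<forall>t\<in>{0..T}. Y t \<in> borel_measurable (sigma (space M) (bm_filt M W t))) \<and>
     (\<forall>\<omega>\<in>space M. continuous_on {0..T} (\<lambda>t. Y t \<omega>)) \<and>
     (\<integral>\<^sup>+ \<omega>. ennreal ((SUP t\<in>{0..T}. \<bar>Y t \<omega>\<bar>)\<^sup>2) \<partial>completion M) < \<infinity>"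

(* membership in Q^alpha(F):  ||Y|| < \<infinity>  iff  sup_tau E Q < \<infinity>  (alpha > 0) *)
definition in_Q :: "'a measure \<Rightarrow> (real \<Rightarrow> 'a \<Rightarrow> real^'d::finite) \<Rightarrow> real \<Rightarrow> real \<Rightarrow> (real \<Rightarrow> 'a \<Rightarrow> real) \<Rightarrow> bool" where
  "in_Q M W T \<alpha> Y \<longleftrightarrow> wiener_functional M W T Y \<and> Qnorm_pow M W T \<alpha> Y < \<infinity>"

definition fbm_cov :: "real \<Rightarrow> real \<Rightarrow> real \<Rightarrow> real" where
  "fbm_cov H s t = (s powr (2*H) + t powr (2*H) - \<bar>t - s\<bar> powr (2*H)) / 2"

(* fractional Brownian motion with Hurst parameter H on the measure space N, continuous paths:
   centered Gaussian process on [0,\<infinity>) with covariance fbm_cov H *)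
definition fbm :: "'a measure \<Rightarrow> real \<Rightarrow> (real \<Rightarrow> 'a \<Rightarrow> real) \<Rightarrow> bool" where
  "fbm N H B \<longleftrightarrow>
     (\<forall>t\<ge>0. B t \<in> borel_measurable N) \<and>
     (\<forall>\<omega>\<in>space N. continuous_on {0..} (\<lambda>t. B t \<omega>)) \<and>
     (\<forall>(n::nat) (c::nat \<Rightarrow> real) (t::nat \<Rightarrow> real). (\<forall>i<n. 0 \<le> t i) \<longrightarrow>
        (let v = (\<Sum>i<n. \<Sum>j<n. c i * c j * fbm_cov H (t i) (t j)) in
          (0 < v \<longrightarrow> distributed N lborel (\<lambda>\<omega>. \<Sum>i<n. c i * B (t i) \<omega>)
                          (\<lambda>x. ennreal (normal_density 0 (sqrt v) x))) \<and>
          (v = 0 \<longrightarrow> (AE \<omega> in N. (\<Sum>i<n. c i * B (t i) \<omega>) = 0))))"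

end

theory Submission
  imports Defs
begin

text \<open>Increments of fractional Brownian motion over an interval of length \<open>h\<close> are centred Gaussians
  with standard deviation \<open>h powr H\<close>. Put \<open>r = 2 powr (-1/p)\<close> and pick \<open>m\<close> with \<open>m (H - 1/p) > 1/2\<close>.
  Then the expectation of \<open>Z\<close>, the sum of \<open>(D / r^n)^(2m)\<close> over all dyadic increments \<open>D\<close> of \<open>B\<close>
  of level \<open>n\<close> on \<open>[0, T]\<close>, is a geometric series with ratio \<open>2 powr (1 - 2m (H - 1/p)) < 1\<close>, so \<open>Z\<close> is
  integrable. Pathwise, each dyadic increment of level \<open>n\<close> is at most \<open>Z powr (1/2m) * r^n\<close>, and
  Kolmogorov's chaining along dyadic approximations turns this into
  \<open>\<bar>B v - B u\<bar> powr p \<le> C (1 + Z) (v - u)\<close> and \<open>\<bar>B t\<bar> \<le> C Z powr (1/2m)\<close>. Telescoping over a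
  partition then bounds every \<open>Q\<^sup>p\<close>-sum of \<open>B\<close>, and likewise \<open>sup \<bar>B\<bar>\<^sup>2\<close>, by \<open>C (1 + Z)\<close>.\<close>

section \<open>Dyadic chaining\<close>

definition dyadic_floor :: "nat \<Rightarrow> real \<Rightarrow> real" where
  "dyadic_floor n x = of_int \<lfloor>x * 2^n\<rfloor> / 2^n"

lemma dyadic_floor_bounds:
  fixes x :: real
  assumes "0 \<le> x"
  shows "0 \<le> dyadic_floor n x" "dyadic_floor n x \<le> x" "x - dyadic_floor n x < 1/2^n"
proof -
  have a: "of_int \<lfloor>x * 2^n\<rfloor> \<le> x * 2^n" "x * 2^n < of_int \<lfloor>x * 2^n\<rfloor> + 1" by linarith+
  show "0 \<le> dyadic_floor n x" unfolding dyadic_floor_def using assms by simp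
  show "dyadic_floor n x \<le> x" unfolding dyadic_floor_def using a by (simp add: divide_le_eq)
  have "x * 2^n - 1 < of_int \<lfloor>x * 2^n\<rfloor>" using a by linarith
  then have "(x * 2^n - 1) / 2^n < of_int \<lfloor>x * 2^n\<rfloor> / 2^n" by (simp add: divide_strict_right_mono)
  then show "x - dyadic_floor n x < 1/2^n" unfolding dyadic_floor_def by (simp add: diff_divide_distrib)
qed

lemma dyadic_floor_tendsto:
  fixes x :: real
  assumes "0 \<le> x"
  shows "(\<lambda>n. dyadic_floor n x) \<longlonglongrightarrow> x"
proof (rule tendsto_sandwich[OF _ _ _ tendsto_const])
  have "(\<lambda>n. (1/2::real)^n) \<longlonglongrightarrow> 0" by (rule LIMSEQ_power_zero) simp
  then show "(\<lambda>n. x - (1/2)^n) \<longlonglongrightarrow> x" using tendsto_diff[OF tendsto_const, of _ 0 sequentially x] by simp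
  show "\<forall>\<^sub>F n in sequentially. x - (1/2)^n \<le> dyadic_floor n x"
    using dyadic_floor_bounds(3)[OF assms] by (intro always_eventually) (smt (verit) power_one_over)
  show "\<forall>\<^sub>F n in sequentially. dyadic_floor n x \<le> x"
    using dyadic_floor_bounds(2)[OF assms] by auto
qed

lemma dyadic_floor_close_cases:
  fixes s t :: real
  assumes "0 \<le> s" "s \<le> t" "t \<le> 1" "t - s \<le> 1/2^m"
  shows "dyadic_floor m t = dyadic_floor m s \<or>
    (\<exists>k::nat. k < 2^m \<and> dyadic_floor m s = real k / 2^m \<and> dyadic_floor m t = real (k+1) / 2^m)"
proof -
  define js where "js = \<lfloor>s * 2^m\<rfloor>"
  define jt where "jt = \<lfloor>t * 2^m\<rfloor>"
  have "js \<le> jt" unfolding js_def jt_def using assms by (intro floor_mono) (simp add: mult_right_mono)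
  moreover have "t * 2^m \<le> s * 2^m + 1" using assms(4) by (simp add: field_simps)
  then have "jt \<le> js + 1" unfolding js_def jt_def by linarith
  ultimately consider "jt = js" | "jt = js + 1" by linarith
  then show ?thesis
  proof cases
    case 1
    then show ?thesis by (simp add: dyadic_floor_def js_def jt_def)
  next
    case 2
    have "js \<ge> 0" unfolding js_def using assms by simp
    have "of_int jt \<le> t * 2^m" unfolding jt_def by linarith
    also have "\<dots> \<le> 2^m" using assms by (intro mult_left_le_one_le) auto
    finally have "jt \<le> 2^m" by (metis of_int_numeral of_int_power of_int_le_iff)
    define k where "k = nat js"
    have "k < 2^m" unfolding k_def using 2 \<open>jt \<le> 2^m\<close> \<open>js \<ge> 0\<close> by (subst nat_less_iff) auto
    moreover have "dyadic_floor m s = real k / 2^m" "dyadic_floor m t = real (k+1) / 2^m"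
      unfolding dyadic_floor_def js_def[symmetric] jt_def[symmetric] k_def using 2 \<open>js \<ge> 0\<close> by auto
    ultimately show ?thesis by blast
  qed
qed

lemma dyadic_floor_Suc_cases:
  fixes x :: real
  assumes "0 \<le> x" "x \<le> 1"
  shows "dyadic_floor (Suc n) x = dyadic_floor n x \<or>
    (\<exists>k::nat. k < 2^Suc n \<and> dyadic_floor n x = real k / 2^Suc n \<and>
       dyadic_floor (Suc n) x = real (k+1) / 2^Suc n)"
proof -
  define j where "j = \<lfloor>x * 2^n\<rfloor>"
  define i where "i = \<lfloor>x * 2^Suc n\<rfloor>"
  have j: "of_int j \<le> x * 2^n" "x * 2^n < of_int j + 1" unfolding j_def by linarith+
  have i: "of_int i \<le> x * 2^Suc n" "x * 2^Suc n < of_int i + 1" unfolding i_def by linarith+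
  have "2*j \<le> i" unfolding i_def le_floor_iff using j by simp
  moreover have "i \<le> 2*j+1" using j i by simp
  ultimately consider "i = 2*j" | "i = 2*j+1" by linarith
  then show ?thesis
  proof cases
    case 1
    then show ?thesis unfolding dyadic_floor_def i_def[symmetric] j_def[symmetric] by simp
  next
    case 2
    have "j \<ge> 0" unfolding j_def using assms by simp
    have "x * 2^Suc n \<le> (2::real)^Suc n" using assms by (intro mult_left_le_one_le) auto
    then have "of_int i \<le> (2::real)^Suc n" using i(1) by linarith
    then have "i \<le> 2^Suc n" by (metis of_int_numeral of_int_power of_int_le_iff)
    define k where "k = nat (2*j)"
    have "real k = 2 * of_int j" unfolding k_def using \<open>j \<ge> 0\<close> by simp
    moreover have "k < 2^Suc n" unfolding k_def using 2 \<open>j \<ge> 0\<close> \<open>i \<le> 2^Suc n\<close>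
      by (subst nat_less_iff) auto
    ultimately show ?thesis unfolding dyadic_floor_def i_def[symmetric] j_def[symmetric] using 2
      by (intro disjI2 exI[of _ k]) (auto simp: field_simps)
  qed
qed

text \<open>One step between adjacent level-\<open>m\<close> dyadic points plus the two geometric chains from
  \<open>s\<close> and \<open>t\<close> down to their level-\<open>m\<close> dyadic floors.\<close>
definition chaining_const :: "real \<Rightarrow> real" where
  "chaining_const r = 1 + 2 * (r / (1 - r))"

lemma chaining_const_ge_one: "0 \<le> r \<Longrightarrow> r < 1 \<Longrightarrow> 1 \<le> chaining_const r"
  unfolding chaining_const_def by simp

lemma dyadic_floor_chaining_bound:
  fixes g :: "real \<Rightarrow> real" and L r :: real
  assumes cont: "continuous_on {0..1} g" and r: "0 < r" "r < 1" and L: "0 \<le> L"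
    and inc: "\<And>n k. k < 2^n \<Longrightarrow> \<bar>g (real (k+1)/2^n) - g (real k/2^n)\<bar> \<le> L * r^n"
    and x: "0 \<le> x" "x \<le> 1"
  shows "\<bar>g x - g (dyadic_floor m x)\<bar> \<le> L * r^m * (r/(1-r))"
proof -
  have step: "\<bar>g (dyadic_floor (Suc n) x) - g (dyadic_floor n x)\<bar> \<le> L * r^Suc n" for n
    using dyadic_floor_Suc_cases[OF x, of n] inc[of _ "Suc n"] L r by auto
  have tele: "\<bar>g (dyadic_floor (d+m) x) - g (dyadic_floor m x)\<bar> \<le> L * (\<Sum>i<d. r^(m+i+1))" for d
  proof (induction d)
    case (Suc d)
    have "\<bar>g (dyadic_floor (Suc d + m) x) - g (dyadic_floor m x)\<bar>
        \<le> \<bar>g (dyadic_floor (Suc (d+m)) x) - g (dyadic_floor (d+m) x)\<bar>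
          + \<bar>g (dyadic_floor (d+m) x) - g (dyadic_floor m x)\<bar>"
      by simp
    also have "\<dots> \<le> L * r^(m+d+1) + L * (\<Sum>i<d. r^(m+i+1))"
      using step[of "d+m"] Suc.IH by (simp add: add.commute)
    finally show ?case by (simp add: algebra_simps)
  qed simp
  have geometric: "L * (\<Sum>i<d. r^(m+i+1)) \<le> L * r^m * (r/(1-r))" for d
  proof -
    have "(\<Sum>i<d. r^i) \<le> (\<Sum>i. r^i)"
      by (rule sum_le_suminf) (use r in \<open>auto intro!: summable_geometric\<close>)
    also have "\<dots> = 1/(1-r)" using r by (simp add: suminf_geometric)
    finally have "r^m * r * (\<Sum>i<d. r^i) \<le> r^m * r * (1/(1-r))" using r by (intro mult_left_mono) auto
    moreover have "(\<Sum>i<d. r^(m+i+1)) = r^m * r * (\<Sum>i<d. r^i)"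
      by (simp add: sum_distrib_left power_add mult_ac)
    ultimately have "(\<Sum>i<d. r^(m+i+1)) \<le> r^m * r * (1/(1-r))" by simp
    from mult_left_mono[OF this L] show ?thesis by (simp add: mult.assoc)
  qed
  have "(\<lambda>d. dyadic_floor (d+m) x) \<longlonglongrightarrow> x"
    using LIMSEQ_ignore_initial_segment[OF dyadic_floor_tendsto[OF x(1)], of m] by simp
  then have "(\<lambda>d. g (dyadic_floor (d+m) x)) \<longlonglongrightarrow> g x"
    by (rule continuous_on_tendsto_compose[OF cont])
      (use x dyadic_floor_bounds[OF x(1)] in \<open>auto intro!: always_eventually intro: order_trans\<close>)
  then have "(\<lambda>d. \<bar>g (dyadic_floor (d+m) x) - g (dyadic_floor m x)\<bar>) \<longlonglongrightarrow> \<bar>g x - g (dyadic_floor m x)\<bar>"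
    by (intro tendsto_intros)
  then show ?thesis
    by (rule LIMSEQ_le_const2) (use tele geometric order_trans in blast)
qed

lemma dyadic_increments_modulus_bound:
  fixes g :: "real \<Rightarrow> real" and L r :: real
  assumes cont: "continuous_on {0..1} g" and r: "0 < r" "r < 1" and L: "0 \<le> L"
    and inc: "\<And>n k. k < 2^n \<Longrightarrow> \<bar>g (real (k+1)/2^n) - g (real k/2^n)\<bar> \<le> L * r^n"
    and st: "0 \<le> s" "s \<le> t" "t \<le> 1" and close: "t - s \<le> 1/2^m"
  shows "\<bar>g t - g s\<bar> \<le> L * r^m * chaining_const r"
proof -
  have "\<bar>g (dyadic_floor m t) - g (dyadic_floor m s)\<bar> \<le> L * r^m"
    using dyadic_floor_close_cases[OF st close] inc[of _ m] L r by auto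
  moreover have "\<bar>g t - g (dyadic_floor m t)\<bar> \<le> L * r^m * (r/(1-r))"
    and "\<bar>g s - g (dyadic_floor m s)\<bar> \<le> L * r^m * (r/(1-r))"
    using st by (intro dyadic_floor_chaining_bound[OF cont r L inc]; simp)+
  moreover have "\<bar>g t - g s\<bar> \<le> \<bar>g t - g (dyadic_floor m t)\<bar>
      + \<bar>g (dyadic_floor m t) - g (dyadic_floor m s)\<bar> + \<bar>g s - g (dyadic_floor m s)\<bar>"
    by linarith
  ultimately have "\<bar>g t - g s\<bar> \<le> L * r^m * (r/(1-r)) + L * r^m + L * r^m * (r/(1-r))"
    by linarith
  then show ?thesis unfolding chaining_const_def by (simp add: algebra_simps)
qed

lemma exists_dyadic_scale:
  fixes \<delta> :: real
  assumes "0 < \<delta>" "\<delta> \<le> 1"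
  obtains m :: nat where "\<delta> \<le> (1/2)^m" "(1/2)^m \<le> 2 * \<delta>"
proof -
  obtain n :: nat where "(1/2::real)^n < \<delta>" using real_arch_pow_inv[of \<delta> "1/2::real"] assms by auto
  from ex_least_nat_le[of "\<lambda>n. (1/2::real)^n < \<delta>", OF this]
  obtain k where k: "\<forall>i<k. \<not> (1/2::real)^i < \<delta>" "(1/2::real)^k < \<delta>" by blast
  have "k \<noteq> 0" using k assms by (intro notI) simp
  then obtain m where "k = Suc m" by (cases k) auto
  then have "\<delta> \<le> (1/2)^m" "(1/2)^m \<le> 2 * \<delta>" using k by (simp_all add: not_less)
  then show ?thesis by (rule that)
qed

lemma dyadic_increments_holder_powr:
  fixes g :: "real \<Rightarrow> real" and L p :: real
  defines "r \<equiv> 2 powr (- (1/p))"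
  assumes cont: "continuous_on {0..1} g" and p: "0 < p" and L: "0 \<le> L"
    and inc: "\<And>n k. k < 2^n \<Longrightarrow> \<bar>g (real (k+1)/2^n) - g (real k/2^n)\<bar> \<le> L * r^n"
    and st: "0 \<le> s" "s \<le> t" "t \<le> 1"
  shows "\<bar>g t - g s\<bar> powr p \<le> (L * chaining_const r) powr p * 2 * (t - s)"
proof (cases "s = t")
  case False
  have r: "0 < r" "r < 1" unfolding r_def using p by (auto intro!: powr_less_one)
  define K where "K = chaining_const r"
  have K: "0 \<le> K" unfolding K_def using r chaining_const_ge_one[of r] by simp
  have "0 < t - s" "t - s \<le> 1" using st False by auto
  then obtain m :: nat where m: "t - s \<le> (1/2)^m" "(1/2)^m \<le> 2 * (t - s)"
    by (rule exists_dyadic_scale)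
  have close: "t - s \<le> 1/2^m" using m(1) by (simp add: power_one_over)
  have "r^m = ((1/2)^m) powr (1/p)"
  proof -
    have "r^m = 2 powr (real m * (- (1/p)))" unfolding r_def by (rule powr_power) simp
    also have "\<dots> = (2 powr (- real m)) powr (1/p)" by (simp add: powr_powr)
    also have "2 powr (- real m) = (1/2::real)^m"
      by (simp add: powr_minus powr_realpow power_one_over inverse_eq_divide)
    finally show ?thesis .
  qed
  moreover have "\<bar>g t - g s\<bar> \<le> L * r^m * K"
    using dyadic_increments_modulus_bound[OF cont r L inc st close] unfolding K_def .
  ultimately have "\<bar>g t - g s\<bar> \<le> (L * K) * ((1/2)^m) powr (1/p)" by (simp add: mult_ac)
  then have "\<bar>g t - g s\<bar> powr p \<le> ((L * K) * ((1/2)^m) powr (1/p)) powr p"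
    using p by (intro powr_mono2) auto
  also have "\<dots> = (L * K) powr p * (1/2)^m"
    using L K p by (simp add: powr_mult powr_powr)
  also have "\<dots> \<le> (L * K) powr p * (2 * (t - s))" using m by (intro mult_left_mono) auto
  finally show ?thesis unfolding K_def by (simp add: algebra_simps)
qed simp

section \<open>Paths controlled by a dyadic moment sum\<close>

lemma le_powr_inverse_if_power_le:
  fixes a z :: real
  assumes "0 \<le> a" "a^j \<le> z" "0 < j"
  shows "a \<le> z powr (1/j)"
proof (cases "a = 0")
  case False
  then have "a = (a^j) powr (1/j)" using assms by (simp add: powr_realpow[symmetric] powr_powr)
  also have "\<dots> \<le> z powr (1/j)" using assms by (intro powr_mono2) auto
  finally show ?thesis .
qed simp

lemma powr_le_one_plus:
  fixes z e :: real
  assumes "0 \<le> z" "0 \<le> e" "e \<le> 1"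
  shows "z powr e \<le> 1 + z"
proof (cases "z \<le> 1")
  case True
  then have "z powr e \<le> 1 powr e" using assms by (intro powr_mono2) auto
  then show ?thesis using assms by simp
next
  case False
  then have "z powr e \<le> z powr 1" using assms by (intro powr_mono) auto
  then show ?thesis using False by simp
qed

lemma ennreal_le_mult_one_plus:
  assumes "x \<le> c * (1 + z)" "0 \<le> c" "0 \<le> z"
  shows "ennreal x \<le> ennreal c * (1 + ennreal z)"
proof -
  have "ennreal x \<le> ennreal (c * (1 + z))" using assms(1) by (rule ennreal_leI)
  also have "\<dots> = ennreal c * (1 + ennreal z)" using assms(2,3) by (simp add: ennreal_mult ennreal_plus)
  finally show ?thesis .
qed

definition dyadic_moment_sum :: "real \<Rightarrow> real \<Rightarrow> nat \<Rightarrow> (real \<Rightarrow> real) \<Rightarrow> ennreal" where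
  "dyadic_moment_sum T r m f =
     (\<Sum>n. ennreal (\<Sum>k<2^n. ((f (real (k+1)/2^n*T) - f (real k/2^n*T)) / r^n)^(2*m)))"

lemma dyadic_increment_le_moment_sum:
  fixes f :: "real \<Rightarrow> real"
  assumes Z: "dyadic_moment_sum T r m f = ennreal z" and z: "0 \<le> z" and r: "0 < r" and m: "0 < m"
    and k: "k < 2^n"
  shows "\<bar>f (real (k+1)/2^n*T) - f (real k/2^n*T)\<bar> \<le> z powr (1 / (2 * real m)) * r^n"
proof -
  define D where "D = f (real (k+1)/2^n*T) - f (real k/2^n*T)"
  define level where "level n' = ennreal (\<Sum>k<2^n'. ((f (real (k+1)/2^n'*T) - f (real k/2^n'*T)) / r^n')^(2*m))"
    for n'
  have "ennreal ((D/r^n)^(2*m)) \<le> level n" unfolding level_def D_def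
    by (intro ennreal_leI member_le_sum) (use k in \<open>auto simp: zero_le_even_power\<close>)
  also have "level n \<le> dyadic_moment_sum T r m f" unfolding dyadic_moment_sum_def level_def[symmetric]
    using sum_le_suminf[OF summableI, of "{n}" level] by simp
  finally have "(D/r^n)^(2*m) \<le> z" unfolding Z using z by simp
  moreover have "(\<bar>D\<bar>/r^n)^(2*m) = \<bar>D/r^n\<bar>^(2*m)" using r by (simp add: abs_divide)
  moreover have "\<bar>D/r^n\<bar>^(2*m) = (D/r^n)^(2*m)" by (rule power_even_abs) simp
  ultimately have "(\<bar>D\<bar>/r^n)^(2*m) \<le> z" by simp
  then have "\<bar>D\<bar>/r^n \<le> z powr (1/real (2*m))" using m r by (intro le_powr_inverse_if_power_le) auto
  then show ?thesis unfolding D_def using r by (simp add: divide_le_eq)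
qed

lemma continuous_on_rescale_unit:
  fixes f :: "real \<Rightarrow> real"
  assumes "continuous_on {0..T} f" "0 < T"
  shows "continuous_on {0..1} (\<lambda>x. f (x*T))"
  by (rule continuous_on_compose2[OF assms(1)]) (use assms(2) in \<open>auto intro!: continuous_intros\<close>)

lemma holder_powr_of_dyadic_moment_sum:
  fixes f :: "real \<Rightarrow> real" and p :: real
  defines "r \<equiv> 2 powr (- (1/p))"
  assumes cont: "continuous_on {0..T} f" and T: "0 < T" and p: "0 < p" "p \<le> 2 * real m"
    and Z: "dyadic_moment_sum T r m f = ennreal z" and z: "0 \<le> z"
    and uv: "0 \<le> u" "u \<le> v" "v \<le> T"
  shows "\<bar>f v - f u\<bar> powr p \<le> 2 * chaining_const r powr p * (1 + z) * ((v - u) / T)"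
proof -
  have m: "0 < m" using p by (cases m) auto
  have r: "0 < r" "r < 1" unfolding r_def using p by (auto intro!: powr_less_one)
  define K where "K = chaining_const r"
  define L where "L = z powr (1 / (2 * real m))"
  have K: "0 \<le> K" unfolding K_def using r chaining_const_ge_one[of r] by simp
  have inc: "\<And>n k. k < 2^n \<Longrightarrow> \<bar>f (real (k+1)/2^n*T) - f (real k/2^n*T)\<bar> \<le> L * r^n"
    unfolding L_def by (rule dyadic_increment_le_moment_sum[OF Z z r(1) m])
  have L: "0 \<le> L" unfolding L_def by simp
  note holder = dyadic_increments_holder_powr[where g="\<lambda>x. f (x*T)" and L=L and p=p and s="u/T" and t="v/T",
      folded r_def]
  have holder_at: "\<bar>f v - f u\<bar> powr p \<le> (L*K) powr p * (2 * (v/T - u/T))"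
    unfolding K_def using holder[OF continuous_on_rescale_unit[OF cont T] p(1) L inc] uv T
    by (simp add: divide_right_mono mult.assoc)
  have "(L*K) powr p = K powr p * z powr (p / (2 * real m))"
    unfolding L_def using z K by (simp add: powr_mult powr_powr mult_ac)
  also have "\<dots> \<le> K powr p * (1 + z)"
    using z p m by (intro mult_left_mono powr_le_one_plus) auto
  finally have "\<bar>f v - f u\<bar> powr p \<le> K powr p * (1 + z) * (2 * (v/T - u/T))"
    using holder_at T uv by (smt (verit) divide_right_mono mult_right_mono)
  then show ?thesis unfolding K_def diff_divide_distrib by (simp only: mult_ac)
qed

lemma abs_le_of_dyadic_moment_sum:
  fixes f :: "real \<Rightarrow> real"
  assumes cont: "continuous_on {0..T} f" and T: "0 < T" and r: "0 < r" "r < 1" and m: "0 < m"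
    and Z: "dyadic_moment_sum T r m f = ennreal z" and z: "0 \<le> z" and t: "0 \<le> t" "t \<le> T"
  shows "\<bar>f t - f 0\<bar> \<le> chaining_const r * z powr (1 / (2 * real m))"
proof -
  have L: "0 \<le> z powr (1 / (2 * real m))" by simp
  have "\<bar>f (t/T*T) - f (0*T)\<bar> \<le> z powr (1 / (2 * real m)) * r^0 * chaining_const r"
    using t T
    by (intro dyadic_increments_modulus_bound[where g="\<lambda>x. f (x*T)", OF continuous_on_rescale_unit[OF cont T]
        r L dyadic_increment_le_moment_sum[OF Z z r(1) m]]) auto
  then show ?thesis using T by (simp add: mult.commute)
qed

lemma sup_sq_le_dyadic_moment_sum:
  fixes f :: "real \<Rightarrow> real"
  assumes cont: "continuous_on {0..T} f" and T: "0 < T" and r: "0 < r" "r < 1" and m: "0 < m"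
    and f0: "f 0 = 0"
  shows "ennreal ((SUP t\<in>{0..T}. \<bar>f t\<bar>)\<^sup>2) \<le> ennreal (chaining_const r ^ 2) * (1 + dyadic_moment_sum T r m f)"
proof (cases "dyadic_moment_sum T r m f")
  case (real z)
  define K where "K = chaining_const r"
  have K: "1 \<le> K" unfolding K_def using r by (simp add: chaining_const_ge_one)
  have bound: "\<bar>f t\<bar> \<le> K * z powr (1 / (2 * real m))" if "t \<in> {0..T}" for t
    using abs_le_of_dyadic_moment_sum[OF cont T r m real(2,1)] that f0 unfolding K_def by simp
  have "0 \<le> (SUP t\<in>{0..T}. \<bar>f t\<bar>)"
    using T bound by (intro order_trans[OF abs_ge_zero cSUP_upper[of 0]] bdd_aboveI2) auto
  moreover have "(SUP t\<in>{0..T}. \<bar>f t\<bar>) \<le> K * z powr (1 / (2 * real m))"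
    using T bound by (intro cSUP_least) auto
  ultimately have "(SUP t\<in>{0..T}. \<bar>f t\<bar>)\<^sup>2 \<le> (K * z powr (1 / (2 * real m)))\<^sup>2"
    by (intro power_mono)
  also have "\<dots> = K\<^sup>2 * z powr (1 / real m)"
    by (simp add: power_mult_distrib power2_eq_square powr_add[symmetric])
  also have "\<dots> \<le> K\<^sup>2 * (1 + z)"
    using real(1) m by (intro mult_left_mono powr_le_one_plus) auto
  finally show ?thesis
    unfolding real(2) K_def by (rule ennreal_le_mult_one_plus) (use real(1) in auto)
next
  case top
  have "0 < chaining_const r" using chaining_const_ge_one[of r] r by simp
  then show ?thesis unfolding top by simp
qed

lemma suminf_increments_powr_le:
  fixes f :: "real \<Rightarrow> real" and s :: "nat \<Rightarrow> real" and A T p :: real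
  assumes s0: "s 0 = 0" and s_incr: "\<And>n. s n < s (Suc n)" and T: "0 < T" and A: "0 \<le> A"
    and holder: "\<And>u v. 0 \<le> u \<Longrightarrow> u \<le> v \<Longrightarrow> v \<le> T \<Longrightarrow> \<bar>f v - f u\<bar> powr p \<le> A * (v - u)"
  shows "(\<Sum>n. ennreal (\<bar>f (min (s (Suc n)) T) - f (min (s n) T)\<bar> powr p)) \<le> ennreal (A * T)"
proof -
  define c where "c n = min (s n) T" for n
  have "0 \<le> s n" for n
  proof (induction n)
    case (Suc n)
    then show ?case using s_incr[of n] by linarith
  qed (simp add: s0)
  then have c_mono: "c n \<le> c (Suc n)" and c_range: "0 \<le> c n" "c n \<le> T" for n
    unfolding c_def using s_incr[of n] T by auto
  have "(\<Sum>i<N. ennreal (\<bar>f (c (Suc i)) - f (c i)\<bar> powr p)) \<le> ennreal (A * T)" for N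
  proof -
    have "(\<Sum>i<N. ennreal (\<bar>f (c (Suc i)) - f (c i)\<bar> powr p)) \<le> (\<Sum>i<N. ennreal (A * (c (Suc i) - c i)))"
      by (intro sum_mono ennreal_leI holder c_range c_mono)
    also have "\<dots> = ennreal (\<Sum>i<N. A * (c (Suc i) - c i))"
      using A c_mono by (intro sum_ennreal) auto
    also have "(\<Sum>i<N. A * (c (Suc i) - c i)) = A * (c N - c 0)"
      by (simp add: sum_distrib_left[symmetric] sum_lessThan_telescope)
    also have "\<dots> \<le> A * T" using A c_range[of N] c_range[of 0] by (simp add: mult_left_mono)
    finally show ?thesis by (simp add: ennreal_leI order_trans)
  qed
  then show ?thesis unfolding suminf_eq_SUP c_def by (intro SUP_least) auto
qed

lemma Qsum_le_dyadic_moment_sum: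
  fixes Y :: "real \<Rightarrow> 'a \<Rightarrow> real" and p :: real
  defines "r \<equiv> 2 powr (- (1/p))"
  assumes cont: "continuous_on {0..T} (\<lambda>t. Y t \<omega>)" and T: "0 < T" and p: "0 < p" "p \<le> 2 * real m"
    and Y0: "Y 0 \<omega> = 0" and S0: "S 0 \<omega> = 0" and S_incr: "\<And>n. S n \<omega> < S (Suc n) \<omega>"
  shows "Qsum p T Y S \<omega> \<le> ennreal (2 * chaining_const r powr p) * (1 + dyadic_moment_sum T r m (\<lambda>t. Y t \<omega>))"
proof (cases "dyadic_moment_sum T r m (\<lambda>t. Y t \<omega>)")
  case (real z)
  define A where "A = 2 * chaining_const r powr p * (1 + z) / T"
  have "Qsum p T Y S \<omega> \<le> ennreal (A * T)"
    unfolding Qsum_def using Y0 p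
    by (simp, intro suminf_increments_powr_le[where f="\<lambda>t. Y t \<omega>"] S0 S_incr T)
      (use real(1) T holder_powr_of_dyadic_moment_sum[OF cont T p real(2)[unfolded r_def] real(1)]
        in \<open>auto simp: A_def r_def\<close>)
  also have "A * T = 2 * chaining_const r powr p * (1 + z)" unfolding A_def using T by simp
  also have "ennreal \<dots> \<le> ennreal (2 * chaining_const r powr p) * (1 + ennreal z)"
    by (rule ennreal_le_mult_one_plus) (use real(1) in auto)
  finally show ?thesis unfolding real(2) .
next
  case top
  have "0 < chaining_const r" using chaining_const_ge_one[of r] p unfolding r_def
    by (simp add: powr_less_one)
  then show ?thesis unfolding top by simp
qed

section \<open>Moments of fractional Brownian motion\<close>

lemma fbm_measurable: "fbm N H B \<Longrightarrow> 0 \<le> t \<Longrightarrow> B t \<in> borel_measurable N"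
  unfolding fbm_def by blast

lemma fbm_zero_AE:
  assumes "fbm N H B"
  shows "AE \<omega> in N. B 0 \<omega> = 0"
proof -
  have "fbm_cov H 0 0 = 0" by (simp add: fbm_cov_def)
  then show ?thesis
    using assms[unfolded fbm_def, THEN conjunct2, THEN conjunct2, rule_format, of 1 "\<lambda>_. 0" "\<lambda>_. 1"]
    by (simp add: Let_def)
qed

lemma fbm_increment_distributed:
  assumes F: "fbm N H B" and st: "0 \<le> s" "s < t"
  shows "distributed N lborel (\<lambda>\<omega>. B t \<omega> - B s \<omega>) (\<lambda>x. ennreal (normal_density 0 ((t-s) powr H) x))"
proof -
  define c :: "nat \<Rightarrow> real" where "c i = (if i = 0 then 1 else -1)" for i
  define u :: "nat \<Rightarrow> real" where "u i = (if i = 0 then t else s)" for i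
  have var: "(\<Sum>i<2. \<Sum>j<2. c i * c j * fbm_cov H (u i) (u j)) = (t-s) powr (2*H)"
    using st by (simp add: c_def u_def fbm_cov_def numeral_2_eq_2 abs_minus_commute field_simps)
  have combination: "(\<lambda>\<omega>. \<Sum>i<2. c i * B (u i) \<omega>) = (\<lambda>\<omega>. B t \<omega> - B s \<omega>)"
    by (simp add: numeral_2_eq_2 c_def u_def)
  have "((t-s) powr H)^2 = (t-s) powr (2*H)" using st by (subst powr_power) auto
  then have sd: "sqrt ((t-s) powr (2*H)) = (t-s) powr H"
    by (metis abs_of_nonneg powr_ge_zero real_sqrt_abs)
  have "\<forall>i<2. 0 \<le> u i" using st by (auto simp: u_def)
  then show ?thesis
    using F[unfolded fbm_def, THEN conjunct2, THEN conjunct2, rule_format, of 2 u c] st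
    unfolding Let_def var combination sd by auto
qed

lemma nn_integral_even_power_normal:
  assumes D: "distributed N lborel X (\<lambda>x. ennreal (normal_density 0 \<sigma> x))" and \<sigma>: "0 < \<sigma>"
  shows "(\<integral>\<^sup>+\<omega>. ennreal ((X \<omega>)^(2*k)) \<partial>N) = ennreal (fact (2*k) / (2^k * fact k) * \<sigma>^(2*k))"
proof -
  have moment: "has_bochner_integral lborel (\<lambda>x. normal_density 0 \<sigma> x * x^(2*k))
      (fact (2*k) / ((2/\<sigma>\<^sup>2)^k * fact k))"
    using normal_moment_even[where \<mu>=0 and k=k, OF \<sigma>] by simp
  have "(\<integral>\<^sup>+\<omega>. ennreal ((X \<omega>)^(2*k)) \<partial>N)
      = (\<integral>\<^sup>+x. ennreal (normal_density 0 \<sigma> x) * ennreal (x^(2*k)) \<partial>lborel)"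
    using distributed_nn_integral[OF D, of "\<lambda>x. ennreal (x^(2*k))"] by simp
  also have "\<dots> = (\<integral>\<^sup>+x. ennreal (normal_density 0 \<sigma> x * x^(2*k)) \<partial>lborel)"
    by (intro nn_integral_cong) (simp add: ennreal_mult normal_density_nonneg)
  also have "\<dots> = ennreal (fact (2*k) / ((2/\<sigma>\<^sup>2)^k * fact k))"
    using moment unfolding has_bochner_integral_iff
    by (subst nn_integral_eq_integrable) (auto simp: normal_density_nonneg zero_le_even_power)
  also have "fact (2*k) / ((2/\<sigma>\<^sup>2)^k * fact k) = fact (2*k) / (2^k * fact k) * \<sigma>^(2*k)"
    using \<sigma> by (simp add: power_divide field_simps flip: power_mult_distrib power_mult)
  finally show ?thesis .
qed

lemma nn_integral_fbm_increment_power: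
  assumes F: "fbm N H B" and st: "0 \<le> s" "s < t"
  shows "(\<integral>\<^sup>+\<omega>. ennreal ((B t \<omega> - B s \<omega>)^(2*m)) \<partial>N)
    = ennreal (fact (2*m) / (2^m * fact m) * (t - s) powr (2*m*H))"
proof -
  have "((t - s) powr H)^(2*m) = (t - s) powr (2*m*H)"
    using st by (subst powr_power) (auto simp: mult_ac)
  then show ?thesis
    using nn_integral_even_power_normal[OF fbm_increment_distributed[OF F st], of m] st by simp
qed

lemma dyadic_level_moment_identity:
  fixes T r H :: real
  assumes "0 < T"
  shows "2^n * (1/r^n)^(2*m) * (T/2^n) powr (2 * real m * H) = T powr (2 * real m * H) * (2 * (1/r)^(2*m) * 2 powr (- (2 * real m * H)))^n"
proof -
  have "(T/2^n) powr (2 * real m * H) = T powr (2 * real m * H) / (2 powr (2 * real m * H))^n"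
    using assms by (simp add: powr_divide powr_realpow[symmetric] powr_powr mult_ac)
  moreover have "(1/r^n)^(2*m) = ((1/r)^(2*m))^n"
    by (metis power_mult mult.commute power_one_over)
  moreover have "(2 powr (- (2 * real m * H)))^n = 1 / (2 powr (2 * real m * H))^n"
    by (simp add: powr_minus power_one_over inverse_eq_divide power_inverse)
  ultimately show ?thesis by (simp add: power_mult_distrib divide_inverse mult_ac)
qed

lemma nn_integral_dyadic_level_fbm:
  assumes F: "fbm N H B" and T: "0 < T" and r: "0 < r"
  shows "(\<integral>\<^sup>+\<omega>. ennreal (\<Sum>k<2^n. ((B (real (k+1)/2^n*T) \<omega> - B (real k/2^n*T) \<omega>) / r^n)^(2*m)) \<partial>N)
    = ennreal (fact (2*m) / (2^m * fact m) * T powr (2 * real m * H) * (2 * (1/r)^(2*m) * 2 powr (- (2 * real m * H)))^n)"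
proof -
  define c where "c = fact (2*m) / (2^m * fact m :: real)"
  define a where "a = (1/r^n)^(2*m) * (c * (T/2^n) powr (2 * real m * H))"
  have [measurable]: "B (real k / 2^n * T) \<in> borel_measurable N" for k
    using fbm_measurable[OF F] T by simp
  have single: "(\<integral>\<^sup>+\<omega>. ennreal (((B (real (k+1)/2^n*T) \<omega> - B (real k/2^n*T) \<omega>) / r^n)^(2*m)) \<partial>N)
      = ennreal a" for k
  proof -
    have "real (k+1)/2^n*T - real k/2^n*T = T/2^n" by (simp add: field_simps)
    then have increment: "(\<integral>\<^sup>+\<omega>. ennreal ((B (real (k+1)/2^n*T) \<omega> - B (real k/2^n*T) \<omega>)^(2*m)) \<partial>N)
        = ennreal (c * (T/2^n) powr (2 * real m * H))"
      unfolding c_def using T by (subst nn_integral_fbm_increment_power[OF F]) (auto simp: field_simps)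
    have "(\<integral>\<^sup>+\<omega>. ennreal (((B (real (k+1)/2^n*T) \<omega> - B (real k/2^n*T) \<omega>) / r^n)^(2*m)) \<partial>N)
        = (\<integral>\<^sup>+\<omega>. ennreal ((1/r^n)^(2*m)) * ennreal ((B (real (k+1)/2^n*T) \<omega> - B (real k/2^n*T) \<omega>)^(2*m)) \<partial>N)"
      using r by (intro nn_integral_cong) (simp add: ennreal_mult[symmetric] zero_le_even_power power_divide)
    also have "\<dots> = ennreal ((1/r^n)^(2*m)) *
        (\<integral>\<^sup>+\<omega>. ennreal ((B (real (k+1)/2^n*T) \<omega> - B (real k/2^n*T) \<omega>)^(2*m)) \<partial>N)"
      by (rule nn_integral_cmult) measurable
    also have "\<dots> = ennreal a"
      unfolding increment a_def c_def by (rule ennreal_mult[symmetric]) (use r in auto)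
    finally show ?thesis .
  qed
  have "(\<integral>\<^sup>+\<omega>. ennreal (\<Sum>k<2^n. ((B (real (k+1)/2^n*T) \<omega> - B (real k/2^n*T) \<omega>) / r^n)^(2*m)) \<partial>N)
      = (\<integral>\<^sup>+\<omega>. (\<Sum>k<2^n. ennreal (((B (real (k+1)/2^n*T) \<omega> - B (real k/2^n*T) \<omega>) / r^n)^(2*m))) \<partial>N)"
    by (intro nn_integral_cong sum_ennreal[symmetric]) (simp add: zero_le_even_power)
  also have "\<dots> = (\<Sum>k<2^n. (\<integral>\<^sup>+\<omega>. ennreal (((B (real (k+1)/2^n*T) \<omega> - B (real k/2^n*T) \<omega>) / r^n)^(2*m)) \<partial>N))"
    by (rule nn_integral_sum) measurable
  also have "\<dots> = (\<Sum>k<(2::nat)^n. ennreal a)" by (simp only: single)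
  also have "\<dots> = ennreal (2^n * a)"
    by (simp add: ennreal_mult' flip: ennreal_power)
  also have "2^n * a = c * (2^n * (1/r^n)^(2*m) * (T/2^n) powr (2 * real m * H))"
    unfolding a_def by (simp add: mult_ac)
  also have "\<dots> = c * (T powr (2 * real m * H) * (2 * (1/r)^(2*m) * 2 powr (- (2 * real m * H)))^n)"
    using dyadic_level_moment_identity[OF T, of n r m H] by simp
  finally show ?thesis by (simp add: c_def mult_ac)
qed

lemma dyadic_moment_sum_measurable:
  assumes "\<And>t. 0 \<le> t \<Longrightarrow> B t \<in> borel_measurable N" "0 \<le> T"
  shows "(\<lambda>\<omega>. dyadic_moment_sum T r m (\<lambda>t. B t \<omega>)) \<in> borel_measurable N"
proof -
  have [measurable]: "B (real k / 2^n * T) \<in> borel_measurable N" for k n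
    using assms by simp
  show ?thesis unfolding dyadic_moment_sum_def by measurable
qed

lemma nn_integral_dyadic_moment_sum_fbm_finite:
  assumes F: "fbm N H B" and T: "0 < T" and r: "0 < r"
    and ratio: "2 * (1/r)^(2*m) * 2 powr (- (2 * real m * H)) < 1"
  shows "(\<integral>\<^sup>+\<omega>. dyadic_moment_sum T r m (\<lambda>t. B t \<omega>) \<partial>N) < \<infinity>"
proof -
  have [measurable]: "B (real k / 2^n * T) \<in> borel_measurable N" for k n
    using fbm_measurable[OF F] T by simp
  have "(\<integral>\<^sup>+\<omega>. dyadic_moment_sum T r m (\<lambda>t. B t \<omega>) \<partial>N)
      = (\<Sum>n. ennreal (fact (2*m) / (2^m * fact m) * T powr (2 * real m * H) * (2 * (1/r)^(2*m) * 2 powr (- (2 * real m * H)))^n))"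
    unfolding dyadic_moment_sum_def
    by (subst nn_integral_suminf) (measurable, simp only: nn_integral_dyadic_level_fbm[OF F T r])
  also have "\<dots> = ennreal (\<Sum>n. fact (2*m) / (2^m * fact m) * T powr (2 * real m * H) * (2 * (1/r)^(2*m) * 2 powr (- (2 * real m * H)))^n)"
    using r ratio by (intro suminf_ennreal2) (auto intro!: summable_mult summable_geometric)
  finally show ?thesis by simp
qed

lemma exists_moment_order:
  fixes H p :: real
  defines "r \<equiv> 2 powr (- (1/p))"
  assumes H: "0 < H" and p: "1/H < p"
  obtains m :: nat where "p \<le> 2 * real m" "2 * (1/r)^(2*m) * 2 powr (- (2 * real m * H)) < 1"
proof -
  have p0: "0 < p" using H p by (smt (verit) divide_pos_pos)
  define e where "e = H - 1/p"
  have e: "0 < e" unfolding e_def using p H p0 by (simp add: field_simps)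
  define m :: nat where "m = nat \<lceil>p + 1/e\<rceil> + 1"
  have m: "p + 1/e < real m" unfolding m_def by linarith
  then have "1 + e * p < e * real m" using e by (simp add: field_simps)
  moreover have "0 < e * p" using e p0 by simp
  ultimately have "1 < real m * e" by (simp add: mult.commute)
  have "(1/r)^(2*m) = 2 powr (real (2*m) * (1/p))"
    unfolding r_def by (simp add: powr_minus divide_inverse powr_power)
  then have "2 * (1/r)^(2*m) * 2 powr (- (2 * real m * H)) = 2 powr (1 + real (2*m) * (1/p) + (- (2 * real m * H)))"
    by (simp only: powr_add powr_one)
  also have "1 + real (2*m) * (1/p) + (- (2 * real m * H)) = 1 - 2 * (real m * e)"
    unfolding e_def by (simp add: algebra_simps)
  also have "2 powr (1 - 2 * (real m * e)) < 1" using \<open>1 < real m * e\<close> by (intro powr_less_one) auto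
  finally have "2 * (1/r)^(2*m) * 2 powr (- (2 * real m * H)) < 1" .
  moreover have "p \<le> 2 * real m" using m e by (smt (verit) divide_pos_pos of_nat_0_le_iff)
  ultimately show ?thesis by (intro that)
qed

section \<open>A domination criterion for membership in Q\<close>

lemma in_Q_if_dominated:
  fixes M :: "'a measure" and W :: "real \<Rightarrow> 'a \<Rightarrow> real^'d::finite"
    and Y :: "real \<Rightarrow> 'a \<Rightarrow> real" and Z :: "'a \<Rightarrow> ennreal" and c c' :: real
  assumes M: "prob_space M"
    and adapted: "\<forall>t\<in>{0..T}. Y t \<in> borel_measurable (sigma (space M) (bm_filt M W t))"
    and cont: "\<forall>\<omega>\<in>space M. continuous_on {0..T} (\<lambda>t. Y t \<omega>)"
    and Z_measurable: "Z \<in> borel_measurable (completion M)"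
    and Z: "(\<integral>\<^sup>+\<omega>. Z \<omega> \<partial>completion M) < \<infinity>"
    and Q_dom: "AE \<omega> in completion M.
      \<forall>S. random_partition M W S \<longrightarrow> Qsum \<alpha> T Y S \<omega> \<le> ennreal c * (1 + Z \<omega>)"
    and sup_dom: "AE \<omega> in completion M. ennreal ((SUP t\<in>{0..T}. \<bar>Y t \<omega>\<bar>)\<^sup>2) \<le> ennreal c' * (1 + Z \<omega>)"
  shows "in_Q M W T \<alpha> Y"
proof -
  have bound: "(\<integral>\<^sup>+\<omega>. ennreal b * (1 + Z \<omega>) \<partial>completion M) < \<infinity>" for b
  proof -
    have "emeasure (completion M) (space M) = 1"
      using prob_space.emeasure_space_1[OF prob_space.prob_space_completion[OF M]] by simp
    then have "(\<integral>\<^sup>+\<omega>. ennreal b * (1 + Z \<omega>) \<partial>completion M) = ennreal b * (1 + integral\<^sup>N (completion M) Z)"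
      using Z_measurable by (simp add: nn_integral_cmult nn_integral_add)
    then show ?thesis using Z by (simp add: ennreal_mult_less_top)
  qed
  have "Qnorm_pow M W T \<alpha> Y \<le> (\<integral>\<^sup>+\<omega>. ennreal c * (1 + Z \<omega>) \<partial>completion M)"
    unfolding Qnorm_pow_def
    by (intro SUP_least nn_integral_mono_AE) (use Q_dom in \<open>auto elim!: AE_mp\<close>)
  moreover have "(\<integral>\<^sup>+\<omega>. ennreal ((SUP t\<in>{0..T}. \<bar>Y t \<omega>\<bar>)\<^sup>2) \<partial>completion M)
      \<le> (\<integral>\<^sup>+\<omega>. ennreal c' * (1 + Z \<omega>) \<partial>completion M)"
    by (rule nn_integral_mono_AE[OF sup_dom])
  ultimately show ?thesis
    unfolding in_Q_def wiener_functional_def using adapted cont bound le_less_trans by blast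
qed

theorem lemma4p4:
  fixes M :: "'a measure" and W :: "real \<Rightarrow> 'a \<Rightarrow> real^'d::finite"
    and B :: "real \<Rightarrow> 'a \<Rightarrow> real" and H T p :: real
  assumes "brownian_motion M W"
    and "0 < T"
    and "1/2 < H" and "H < 1"
    and "fbm (completion M) H B"
    and "\<forall>t\<ge>0. B t \<in> borel_measurable (sigma (space M) (bm_filt M W t))"
    and "1 / H < p"
  shows "in_Q M W T p B"
proof -
  note T = \<open>0 < T\<close> and F = \<open>fbm (completion M) H B\<close>
  have M: "prob_space M" using \<open>brownian_motion M W\<close> unfolding brownian_motion_def by blast
  have cont: "continuous_on {0..T} (\<lambda>t. B t \<omega>)" if "\<omega> \<in> space (completion M)" for \<omega>
    using F that unfolding fbm_def by (auto intro: continuous_on_subset)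
  have H: "0 < H" using \<open>1/2 < H\<close> by simp
  define r where "r = 2 powr (- (1/p))"
  obtain m :: nat where m: "p \<le> 2 * real m" "2 * (1/r)^(2*m) * 2 powr (- (2 * real m * H)) < 1"
    using exists_moment_order[OF H \<open>1/H < p\<close>] unfolding r_def by blast
  have p: "0 < p" using H \<open>1/H < p\<close> by (smt (verit) divide_pos_pos)
  have r: "0 < r" "r < 1" and "0 < m" unfolding r_def using p m(1) by (auto intro!: powr_less_one)
  show ?thesis
  proof (rule in_Q_if_dominated[OF M _ _ dyadic_moment_sum_measurable
        nn_integral_dyadic_moment_sum_fbm_finite[OF F T r(1) m(2)]])
    show "AE \<omega> in completion M. \<forall>S. random_partition M W S \<longrightarrow>
        Qsum p T B S \<omega> \<le> ennreal (2 * chaining_const r powr p) * (1 + dyadic_moment_sum T r m (\<lambda>t. B t \<omega>))"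
      using fbm_zero_AE[OF F] AE_space
    proof eventually_elim
      case (elim \<omega>)
      then show ?case unfolding r_def random_partition_def
        by (auto intro!: Qsum_le_dyadic_moment_sum cont T p m(1))
    qed
    show "AE \<omega> in completion M. ennreal ((SUP t\<in>{0..T}. \<bar>B t \<omega>\<bar>)\<^sup>2)
        \<le> ennreal (chaining_const r ^ 2) * (1 + dyadic_moment_sum T r m (\<lambda>t. B t \<omega>))"
      using fbm_zero_AE[OF F] AE_space
      by eventually_elim (auto intro!: sup_sq_le_dyadic_moment_sum cont T r \<open>0 < m\<close>)
  qed (use \<open>\<forall>t\<ge>0. B t \<in> _\<close> cont fbm_measurable[OF F] T in auto)
qed

end
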